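(* Let $\mathscr{A}$ be a Kripke structure, $a\in A$, and $k>0$. There is an $\mathbb{M}_k$-coalgebra $\alpha:(\mathscr{A},a)\to\mathbb{M}_k(\mathscr{A},a)$ if and only if the submodel generated by $a$ is a synchronization tree of height $\le k$.
   Context: Kripke structures: $\sigma$-structures with unary symbols $P$ and binary symbols $R_\alpha$; write $a\xrightarrow{\alpha}a'$ for $R_\alpha^{\mathscr{A}}(a,a')$. $\mathbb{M}_k(\mathscr{A},a)$: universe $[a]$ (the point) plus all $[a_0,\alpha_1,a_1,\dots,\alpha_j,a_j]$ with $a_0=a$, $1\le j\le k$, $a_i\xrightarrow{\alpha_{i+1}}a_{i+1}$; $P(s)$ iff $P^{\mathscr{A}}$ holds of the last element $\varepsilon(s)$; $R_\alpha(s,t)$ iff $t=s[\alpha,a']$. Comultiplication: $\delta[a_0,\alpha_1,a_1,\dots,\alpha_j,a_j]=[[a_0],\alpha_1,[a_0,\alpha_1,a_1],\dots,\alpha_j,[a_0,\alpha_1,\dots,\alpha_j,a_j]]$; functor action on a point-preserving homomorphism $h$: $\mathbb{M}_k h[a_0,\alpha_1,a_1,\dots]=[h(a_0),\alpha_1,h(a_1),\dots]$. A coalgebra is a point-preserving homomorphism $\alpha:(\mathscr{A},a)\to\mathbb{M}_k(\mathscr{A},a)$ with $\delta\circ\alpha=\mathbb{M}_k\alpha\circ\alpha$ and $\varepsilon\circ\alpha=\mathrm{id}$. The submodel generated by $a$ is the restriction of $\mathscr{A}$ to elements $a'$ reachable by a finite path $a\xrightarrow{\alpha_1}\cdots\xrightarrow{\alpha_m}a'$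 ($m\ge0$); it is a synchronization tree if each such $a'$ is reached by a unique such path, and its height is the maximum length of such a path.
   Formalization: The coalgebra $\alpha$ goes from the submodel generated by a, not from all of $\mathscr{A}$, to $\mathbb{M}_k(\mathscr{A},a)$, so $\varepsilon\circ\alpha=\mathrm{id}$ and the homomorphism conditions concern only elements reachable from a. The statement above fails without it. *)

theory Defs
  imports Main
begin

text \<open>A Kripke structure is given by a universe A :: 'a set, unary predicates
  P :: 'p => 'a => bool and binary relations R :: 'l => 'a => 'a => bool
  (R l x y means x --l--> y).\<close>

definition kripke :: "'a set \<Rightarrow> ('l \<Rightarrow> 'a \<Rightarrow> 'a \<Rightarrow> bool) \<Rightarrow> bool" where
  "kripke A R \<longleftrightarrow> (\<forall>l x y. R l x y \<longrightarrow> x \<in> A \<and> y \<in> A)"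

text \<open>A path [a0, l1, a1, ..., lj, aj] is represented as (a0, [(l1,a1),...,(lj,aj)]).\<close>

fun is_path :: "('l \<Rightarrow> 'a \<Rightarrow> 'a \<Rightarrow> bool) \<Rightarrow> 'a \<Rightarrow> ('l \<times> 'a) list \<Rightarrow> bool" where
  "is_path R x [] = True"
| "is_path R x ((l, y) # ps) = (R l x y \<and> is_path R y ps)"

definition eps :: "'a \<times> ('l \<times> 'a) list \<Rightarrow> 'a" where
  "eps s = (if snd s = [] then fst s else snd (last (snd s)))"

definition Mk_univ :: "nat \<Rightarrow> ('l \<Rightarrow> 'a \<Rightarrow> 'a \<Rightarrow> bool) \<Rightarrow> 'a \<Rightarrow> ('a \<times> ('l \<times> 'a) list) set" where
  "Mk_univ k R a = {(a, ps) | ps. is_path R a ps \<and> length ps \<le> k}"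

definition Mk_P :: "('p \<Rightarrow> 'a \<Rightarrow> bool) \<Rightarrow> 'p \<Rightarrow> 'a \<times> ('l \<times> 'a) list \<Rightarrow> bool" where
  "Mk_P P p s \<longleftrightarrow> P p (eps s)"

definition Mk_R :: "nat \<Rightarrow> ('l \<Rightarrow> 'a \<Rightarrow> 'a \<Rightarrow> bool) \<Rightarrow> 'a \<Rightarrow> 'l
     \<Rightarrow> 'a \<times> ('l \<times> 'a) list \<Rightarrow> 'a \<times> ('l \<times> 'a) list \<Rightarrow> bool" where
  "Mk_R k R a l s t \<longleftrightarrow> s \<in> Mk_univ k R a \<and> t \<in> Mk_univ k R a \<and>
     (\<exists>a'. t = (fst s, snd s @ [(l, a')]))"

definition hom :: "'a set \<Rightarrow> ('p \<Rightarrow> 'a \<Rightarrow> bool) \<Rightarrow> ('l \<Rightarrow> 'a \<Rightarrow> 'a \<Rightarrow> bool)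
    \<Rightarrow> 'b set \<Rightarrow> ('p \<Rightarrow> 'b \<Rightarrow> bool) \<Rightarrow> ('l \<Rightarrow> 'b \<Rightarrow> 'b \<Rightarrow> bool) \<Rightarrow> ('a \<Rightarrow> 'b) \<Rightarrow> bool" where
  "hom A P R B Q S f \<longleftrightarrow> (\<forall>x\<in>A. f x \<in> B) \<and>
     (\<forall>p. \<forall>x\<in>A. P p x \<longrightarrow> Q p (f x)) \<and>
     (\<forall>l. \<forall>x\<in>A. \<forall>y\<in>A. R l x y \<longrightarrow> S l (f x) (f y))"

definition delta :: "'a \<times> ('l \<times> 'a) list \<Rightarrow>
    ('a \<times> ('l \<times> 'a) list) \<times> ('l \<times> ('a \<times> ('l \<times> 'a) list)) list" where
  "delta s = ((fst s, []),
     map (\<lambda>i. (fst (snd s ! i), (fst s, take (Suc i) (snd s)))) [0..<length (snd s)])"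

definition Mk_map :: "('a \<Rightarrow> 'b) \<Rightarrow> 'a \<times> ('l \<times> 'a) list \<Rightarrow> 'b \<times> ('l \<times> 'b) list" where
  "Mk_map h s = (h (fst s), map (\<lambda>(l, y). (l, h y)) (snd s))"

text \<open>Paths from a ending in a'; the submodel generated by a consists of such a'.\<close>
definition path_to :: "('l \<Rightarrow> 'a \<Rightarrow> 'a \<Rightarrow> bool) \<Rightarrow> 'a \<Rightarrow> ('l \<times> 'a) list \<Rightarrow> 'a \<Rightarrow> bool" where
  "path_to R a ps a' \<longleftrightarrow> is_path R a ps \<and> eps (a, ps) = a'"

definition reachable :: "('l \<Rightarrow> 'a \<Rightarrow> 'a \<Rightarrow> bool) \<Rightarrow> 'a \<Rightarrow> 'a set" where
  "reachable R a = {a'. \<exists>ps. path_to R a ps a'}"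

definition sync_tree :: "('l \<Rightarrow> 'a \<Rightarrow> 'a \<Rightarrow> bool) \<Rightarrow> 'a \<Rightarrow> bool" where
  "sync_tree R a \<longleftrightarrow> (\<forall>a'\<in>reachable R a. \<exists>!ps. path_to R a ps a')"

definition height_le :: "('l \<Rightarrow> 'a \<Rightarrow> 'a \<Rightarrow> bool) \<Rightarrow> 'a \<Rightarrow> nat \<Rightarrow> bool" where
  "height_le R a k \<longleftrightarrow> (\<forall>ps. is_path R a ps \<longrightarrow> length ps \<le> k)"

text \<open>Since M_k(A,a) and every
  coalgebra condition only concern the part of A reachable from the point a, the
  coalgebra is taken on the submodel generated by a.\<close>
definition Mk_coalgebra :: "nat \<Rightarrow> 'a set \<Rightarrow> ('p \<Rightarrow> 'a \<Rightarrow> bool) \<Rightarrow> ('l \<Rightarrow> 'a \<Rightarrow> 'a \<Rightarrow> bool)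
    \<Rightarrow> 'a \<Rightarrow> ('a \<Rightarrow> 'a \<times> ('l \<times> 'a) list) \<Rightarrow> bool" where
  "Mk_coalgebra k A P R a \<alpha> \<longleftrightarrow>
     (let G = A \<inter> reachable R a in
     hom G P R (Mk_univ k R a) (Mk_P P) (Mk_R k R a) \<alpha> \<and>
     \<alpha> a = (a, []) \<and>
     (\<forall>x\<in>G. delta (\<alpha> x) = Mk_map \<alpha> (\<alpha> x)) \<and>
     (\<forall>x\<in>G. eps (\<alpha> x) = x))"

end

theory Submission
  imports Defs
begin

text \<open>A coalgebra \<open>\<alpha>\<close> maps the point to the trivial path and every \<open>x\<close> to a path ending in \<open>x\<close>;
  preservation of the relations forces, by induction along a path \<open>ps\<close> from \<open>a\<close>, that \<open>\<alpha>\<close> sends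
  the end of \<open>ps\<close> to \<open>ps\<close> itself. Hence every reachable element has exactly one path to it,
  and its length is bounded by \<open>k\<close>. Conversely, on a synchronization tree of height \<open>\<le> k\<close>,
  sending each element to its unique path is a homomorphism, and comultiplication holds
  because the prefixes of that path are the unique paths to the intermediate elements.\<close>

lemma eps_Nil [simp]: "eps (x, []) = x"
  by (simp add: eps_def)

lemma eps_Cons [simp]: "eps (x, (l, y) # ps) = eps (y, ps)"
  by (simp add: eps_def)

lemma eps_snoc [simp]: "eps (x, ps @ [(l, y)]) = y"
  by (simp add: eps_def)

lemma is_path_append:
  "is_path R x (ps @ qs) \<longleftrightarrow> is_path R x ps \<and> is_path R (eps (x, ps)) qs"
  by (induction ps arbitrary: x) auto

lemma is_path_snoc:
  "is_path R x (ps @ [(l, y)]) \<longleftrightarrow> is_path R x ps \<and> R l (eps (x, ps)) y"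
  by (simp add: is_path_append)

lemma is_path_take: "is_path R x ps \<Longrightarrow> is_path R x (take n ps)"
  using is_path_append[of R x "take n ps" "drop n ps"] by simp

lemma eps_take_Suc: "i < length ps \<Longrightarrow> eps (x, take (Suc i) ps) = snd (ps ! i)"
  by (cases "ps ! i") (simp add: take_Suc_conv_app_nth)

lemma eps_in_reachable: "is_path R a ps \<Longrightarrow> eps (a, ps) \<in> reachable R a"
  by (auto simp: reachable_def path_to_def)

lemma reachable_subset:
  assumes "kripke A R" "a \<in> A"
  shows "reachable R a \<subseteq> A"
proof
  fix x assume "x \<in> reachable R a"
  then obtain ps where "is_path R a ps" "eps (a, ps) = x"
    by (auto simp: reachable_def path_to_def)
  then show "x \<in> A"
  proof (induction ps arbitrary: x rule: rev_induct)
    case Nil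
    with assms(2) show ?case by simp
  next
    case (snoc p ps)
    with assms(1) show ?case
      by (cases p) (auto simp: is_path_snoc kripke_def)
  qed
qed

lemma Mk_coalgebra_iff:
  assumes "kripke A R" "a \<in> A"
  shows "Mk_coalgebra k A P R a \<alpha> \<longleftrightarrow>
    hom (reachable R a) P R (Mk_univ k R a) (Mk_P P) (Mk_R k R a) \<alpha> \<and> \<alpha> a = (a, []) \<and>
    (\<forall>x\<in>reachable R a. delta (\<alpha> x) = Mk_map \<alpha> (\<alpha> x)) \<and>
    (\<forall>x\<in>reachable R a. eps (\<alpha> x) = x)"
  using reachable_subset[OF assms] by (simp add: Mk_coalgebra_def Int_absorb1 Let_def)


lemma hom_Mk_path_endpoint:
  assumes hom: "hom (reachable R a) P R (Mk_univ k R a) (Mk_P P) (Mk_R k R a) \<alpha>"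
    and point: "\<alpha> a = (a, [])"
    and counit: "\<forall>x\<in>reachable R a. eps (\<alpha> x) = x"
    and path: "is_path R a ps"
  shows "\<alpha> (eps (a, ps)) = (a, ps)"
  using path
proof (induction ps rule: rev_induct)
  case Nil
  from point show ?case by simp
next
  case (snoc p ps)
  obtain l y where p: "p = (l, y)" by (cases p)
  with snoc.prems have ps: "is_path R a ps" and edge: "R l (eps (a, ps)) y"
    by (auto simp: is_path_snoc)
  have y: "y \<in> reachable R a"
    using eps_in_reachable[OF snoc.prems] p by simp
  have "Mk_R k R a l (\<alpha> (eps (a, ps))) (\<alpha> y)"
    using hom eps_in_reachable[OF ps] y edge unfolding hom_def by blast
  then obtain a' where "\<alpha> y = (a, ps @ [(l, a')])"
    using snoc.IH[OF ps] by (auto simp: Mk_R_def)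
  moreover have "eps (\<alpha> y) = y"
    using counit y by blast
  ultimately show ?case
    using p by simp
qed

lemma hom_Mk_imp_sync_tree:
  assumes "hom (reachable R a) P R (Mk_univ k R a) (Mk_P P) (Mk_R k R a) \<alpha>"
    and "\<alpha> a = (a, [])" and "\<forall>x\<in>reachable R a. eps (\<alpha> x) = x"
  shows "sync_tree R a"
  unfolding sync_tree_def
proof
  fix x assume "x \<in> reachable R a"
  then obtain ps where ps: "path_to R a ps x"
    by (auto simp: reachable_def)
  have "qs = ps" if "path_to R a qs x" for qs
    using hom_Mk_path_endpoint[OF assms] ps that by (metis path_to_def snd_conv)
  with ps show "\<exists>!ps. path_to R a ps x" by blast
qed

lemma hom_Mk_imp_height_le:
  assumes "hom (reachable R a) P R (Mk_univ k R a) (Mk_P P) (Mk_R k R a) \<alpha>"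
    and "\<alpha> a = (a, [])" and "\<forall>x\<in>reachable R a. eps (\<alpha> x) = x"
  shows "height_le R a k"
  unfolding height_le_def
proof (intro allI impI)
  fix ps assume ps: "is_path R a ps"
  have "\<alpha> (eps (a, ps)) \<in> Mk_univ k R a"
    using assms(1) eps_in_reachable[OF ps] unfolding hom_def by blast
  then show "length ps \<le> k"
    using hom_Mk_path_endpoint[OF assms ps] by (simp add: Mk_univ_def)
qed


definition tree_coalg :: "('l \<Rightarrow> 'a \<Rightarrow> 'a \<Rightarrow> bool) \<Rightarrow> 'a \<Rightarrow> 'a \<Rightarrow> 'a \<times> ('l \<times> 'a) list" where
  "tree_coalg R a x = (a, THE ps. path_to R a ps x)"

lemma tree_coalg_path:
  assumes "sync_tree R a" "is_path R a ps"
  shows "tree_coalg R a (eps (a, ps)) = (a, ps)"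
proof -
  have ps: "path_to R a ps (eps (a, ps))"
    using assms(2) by (simp add: path_to_def)
  with assms(1) have "\<exists>!qs. path_to R a qs (eps (a, ps))"
    unfolding sync_tree_def reachable_def by blast
  with ps show ?thesis
    by (simp add: tree_coalg_def the1_equality)
qed

lemma reachable_obtain_path:
  assumes "x \<in> reachable R a"
  obtains ps where "is_path R a ps" "x = eps (a, ps)"
  using assms by (auto simp: reachable_def path_to_def)

lemma delta_eq_Mk_map:
  assumes "\<alpha> a = (a, [])"
    and "\<And>i. i < length ps \<Longrightarrow> \<alpha> (snd (ps ! i)) = (a, take (Suc i) ps)"
  shows "delta (a, ps) = Mk_map \<alpha> (a, ps)"
  using assms
  by (auto simp: delta_def Mk_map_def intro!: nth_equalityI split: prod.split) (metis snd_conv)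

lemma tree_coalg_hom:
  assumes tree: "sync_tree R a" and height: "height_le R a k"
  shows "hom (reachable R a) P R (Mk_univ k R a) (Mk_P P) (Mk_R k R a) (tree_coalg R a)"
proof -
  have univ: "tree_coalg R a x \<in> Mk_univ k R a" if "x \<in> reachable R a" for x
    using that height
    by (cases rule: reachable_obtain_path) (auto simp: tree_coalg_path[OF tree] Mk_univ_def height_le_def)
  have edge: "Mk_R k R a l (tree_coalg R a x) (tree_coalg R a y)"
    if x: "x \<in> reachable R a" and y: "y \<in> reachable R a" and "R l x y" for l x y
  proof -
    from x obtain ps where ps: "is_path R a ps" "x = eps (a, ps)"
      by (rule reachable_obtain_path)
    with \<open>R l x y\<close> have "is_path R a (ps @ [(l, y)])"
      by (simp add: is_path_snoc)
    from tree_coalg_path[OF tree this] tree_coalg_path[OF tree ps(1)]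
    show ?thesis
      using univ[OF x] univ[OF y] ps(2) by (auto simp: Mk_R_def)
  qed
  have "Mk_P P p (tree_coalg R a x)" if "x \<in> reachable R a" "P p x" for p x
    using that by (cases rule: reachable_obtain_path) (simp add: tree_coalg_path[OF tree] Mk_P_def)
  with univ edge show ?thesis
    unfolding hom_def by blast
qed

lemma tree_coalg_delta:
  assumes tree: "sync_tree R a" and x: "x \<in> reachable R a"
  shows "delta (tree_coalg R a x) = Mk_map (tree_coalg R a) (tree_coalg R a x)"
proof -
  from x obtain ps where ps: "is_path R a ps" "x = eps (a, ps)"
    by (rule reachable_obtain_path)
  have "tree_coalg R a a = (a, [])"
    using tree_coalg_path[OF tree, of "[]"] by simp
  moreover have "tree_coalg R a (snd (ps ! i)) = (a, take (Suc i) ps)" if "i < length ps" for i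
    using tree_coalg_path[OF tree is_path_take[OF ps(1)], of "Suc i"] eps_take_Suc[OF that]
    by simp
  ultimately have "delta (a, ps) = Mk_map (tree_coalg R a) (a, ps)"
    by (rule delta_eq_Mk_map)
  then show ?thesis
    using tree_coalg_path[OF tree ps(1)] ps(2) by simp
qed

lemma tree_coalg_Mk_coalgebra:
  assumes "kripke A R" "a \<in> A" and tree: "sync_tree R a" and "height_le R a k"
  shows "Mk_coalgebra k A P R a (tree_coalg R a)"
proof -
  have "eps (tree_coalg R a x) = x" if "x \<in> reachable R a" for x
    using that by (cases rule: reachable_obtain_path) (simp add: tree_coalg_path[OF tree])
  moreover have "tree_coalg R a a = (a, [])"
    using tree_coalg_path[OF tree, of "[]"] by simp
  ultimately show ?thesis
    unfolding Mk_coalgebra_iff[OF assms(1,2)]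
    using tree_coalg_hom[OF tree assms(4)] tree_coalg_delta[OF tree] by simp
qed

theorem mainTheorem15:
  fixes A :: "'a set" and P :: "'p \<Rightarrow> 'a \<Rightarrow> bool" and R :: "'l \<Rightarrow> 'a \<Rightarrow> 'a \<Rightarrow> bool"
    and a :: 'a and k :: nat
  assumes "kripke A R" and "a \<in> A" and "k > 0"
  shows "(\<exists>\<alpha>. Mk_coalgebra k A P R a \<alpha>) \<longleftrightarrow> (sync_tree R a \<and> height_le R a k)"
proof
  assume "\<exists>\<alpha>. Mk_coalgebra k A P R a \<alpha>"
  then obtain \<alpha> where "Mk_coalgebra k A P R a \<alpha>" ..
  then have "hom (reachable R a) P R (Mk_univ k R a) (Mk_P P) (Mk_R k R a) \<alpha>"
    and "\<alpha> a = (a, [])" and "\<forall>x\<in>reachable R a. eps (\<alpha> x) = x"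
    by (simp_all add: Mk_coalgebra_iff[OF assms(1,2)])
  then show "sync_tree R a \<and> height_le R a k"
    by (intro conjI hom_Mk_imp_sync_tree hom_Mk_imp_height_le)
next
  assume "sync_tree R a \<and> height_le R a k"
  then have "Mk_coalgebra k A P R a (tree_coalg R a)"
    by (intro tree_coalg_Mk_coalgebra[OF assms(1,2)]) simp_all
  then show "\<exists>\<alpha>. Mk_coalgebra k A P R a \<alpha>" by (rule exI[of _ "tree_coalg R a"])
qed

end
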